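(* Let $A$ be a unital C$^*$-subalgebra of $B(H)$ (with $1_A = 1_H$) and let $\phi$ be a faithful state on $A$. Let $\Theta$ be a $*$-automorphism of $A$ with $\phi\circ\Theta=\phi$, and let $\Theta^*: A \to A$ be its adjoint with respect to $\phi$, i.e. the map with $\phi(y^*\Theta^*(x)) = \phi(\Theta(y)^* x)$ for all $x,y\in A$. Then $\Theta^*$ is an operational extreme point of the set of completely positive maps $A \to A$: whenever $\Theta^* = \sum_{i=1}^m \mathrm{Ad}\, a_i \circ \Psi_i$ with $\Psi_1,\dots,\Psi_m$ completely positive maps $A\to A$ and nonzero $a_1,\dots,a_m\in A$ with $\sum_{i=1}^m a_i a_i^* = 1$, there exist $z_1,\dots,z_m \in \Theta^*(A)'$ with $\mathrm{Ad}\, a_i\circ\Psi_i = z_i\Theta^*$ for all $i$.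
   Context: $\mathrm{Ad}\, v(x) = v x v^*$. $\Theta^*(A)'$ is the commutant of $\Theta^*(A)$ in $B(H)$. *)

theory Defs
  imports "HOL-Analysis.Analysis"
begin

class complex_inner = real_normed_vector +
  fixes scaleC :: "complex \<Rightarrow> 'a \<Rightarrow> 'a"
    and cinner :: "'a \<Rightarrow> 'a \<Rightarrow> complex"
  assumes scaleC_add_right: "scaleC c (x + y) = scaleC c x + scaleC c y"
    and scaleC_add_left: "scaleC (c + d) x = scaleC c x + scaleC d x"
    and scaleC_scaleC: "scaleC c (scaleC d x) = scaleC (c * d) x"
    and scaleC_one: "scaleC 1 x = x"
    and scaleR_scaleC: "scaleR r x = scaleC (complex_of_real r) x"
    and cinner_add_right: "cinner x (y + z) = cinner x y + cinner x z"
    and cinner_scaleC_right: "cinner x (scaleC c y) = c * cinner x y"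
    and cinner_commute: "cinner y x = cnj (cinner x y)"
    and cinner_self_norm: "cinner x x = complex_of_real ((norm x)\<^sup>2)"

class chilbert_space = complex_inner + complete_space

definition clinear_op :: "('h::complex_inner \<Rightarrow> 'h) \<Rightarrow> bool" where
  "clinear_op T \<longleftrightarrow> (\<forall>x y. T (x + y) = T x + T y) \<and> (\<forall>c x. T (scaleC c x) = scaleC c (T x))"

definition BH :: "('h::complex_inner \<Rightarrow> 'h) set" where
  "BH = {T. clinear_op T \<and> (\<exists>K. \<forall>x. norm (T x) \<le> K * norm x)}"

definition adj :: "('h::complex_inner \<Rightarrow> 'h) \<Rightarrow> ('h \<Rightarrow> 'h)" where
  "adj T = (SOME S. \<forall>x y. cinner (T x) y = cinner x (S y))"

definition pos_op :: "('h::complex_inner \<Rightarrow> 'h) \<Rightarrow> bool" where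
  "pos_op T \<longleftrightarrow> (\<forall>x. Im (cinner x (T x)) = 0 \<and> Re (cinner x (T x)) \<ge> 0)"

text \<open>Positivity of an n\<times>n operator matrix X, viewed as an operator on \<open>H\<^sup>n\<close>.\<close>
definition pos_opmat :: "nat \<Rightarrow> (nat \<Rightarrow> nat \<Rightarrow> ('h::complex_inner \<Rightarrow> 'h)) \<Rightarrow> bool" where
  "pos_opmat n X \<longleftrightarrow> (\<forall>\<xi> :: nat \<Rightarrow> 'h.
     Im (\<Sum>i<n. \<Sum>j<n. cinner (\<xi> i) (X i j (\<xi> j))) = 0 \<and>
     Re (\<Sum>i<n. \<Sum>j<n. cinner (\<xi> i) (X i j (\<xi> j))) \<ge> 0)"

definition cstar_subalg :: "('h::chilbert_space \<Rightarrow> 'h) set \<Rightarrow> bool" where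
  "cstar_subalg A \<longleftrightarrow> A \<subseteq> BH \<and> id \<in> A \<and>
     (\<forall>S\<in>A. \<forall>T\<in>A. (\<lambda>x. S x + T x) \<in> A \<and> S \<circ> T \<in> A) \<and>
     (\<forall>S\<in>A. \<forall>c. (\<lambda>x. scaleC c (S x)) \<in> A) \<and>
     (\<forall>S\<in>A. adj S \<in> A) \<and>
     (\<forall>T F. T \<in> BH \<and> (\<forall>n. F n \<in> A) \<and> (\<lambda>n. onorm (\<lambda>x. F n x - T x)) \<longlonglongrightarrow> 0 \<longrightarrow> T \<in> A)"

definition linear_map_on :: "('h::complex_inner \<Rightarrow> 'h) set \<Rightarrow> (('h \<Rightarrow> 'h) \<Rightarrow> ('h \<Rightarrow> 'h)) \<Rightarrow> bool" where
  "linear_map_on A F \<longleftrightarrow> F ` A \<subseteq> A \<and>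
     (\<forall>S\<in>A. \<forall>T\<in>A. F (\<lambda>x. S x + T x) = (\<lambda>x. F S x + F T x)) \<and>
     (\<forall>S\<in>A. \<forall>c. F (\<lambda>x. scaleC c (S x)) = (\<lambda>x. scaleC c (F S x)))"

definition complete_positive :: "('h::complex_inner \<Rightarrow> 'h) set \<Rightarrow> (('h \<Rightarrow> 'h) \<Rightarrow> ('h \<Rightarrow> 'h)) \<Rightarrow> bool" where
  "complete_positive A F \<longleftrightarrow> linear_map_on A F \<and>
     (\<forall>n X. (\<forall>i<n. \<forall>j<n. X i j \<in> A) \<and> pos_opmat n X \<longrightarrow> pos_opmat n (\<lambda>i j. F (X i j)))"

definition faithful_state :: "('h::complex_inner \<Rightarrow> 'h) set \<Rightarrow> (('h \<Rightarrow> 'h) \<Rightarrow> complex) \<Rightarrow> bool" where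
  "faithful_state A \<phi> \<longleftrightarrow>
     (\<forall>S\<in>A. \<forall>T\<in>A. \<phi> (\<lambda>x. S x + T x) = \<phi> S + \<phi> T) \<and>
     (\<forall>S\<in>A. \<forall>c. \<phi> (\<lambda>x. scaleC c (S x)) = c * \<phi> S) \<and>
     \<phi> id = 1 \<and>
     (\<forall>T\<in>A. pos_op T \<longrightarrow> Im (\<phi> T) = 0 \<and> Re (\<phi> T) \<ge> 0) \<and>
     (\<forall>T\<in>A. \<phi> (adj T \<circ> T) = 0 \<longrightarrow> T = (\<lambda>_. 0))"

definition star_automorphism :: "('h::complex_inner \<Rightarrow> 'h) set \<Rightarrow> (('h \<Rightarrow> 'h) \<Rightarrow> ('h \<Rightarrow> 'h)) \<Rightarrow> bool" where
  "star_automorphism A \<Theta> \<longleftrightarrow> linear_map_on A \<Theta> \<and> bij_betw \<Theta> A A \<and>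
     (\<forall>S\<in>A. \<forall>T\<in>A. \<Theta> (S \<circ> T) = \<Theta> S \<circ> \<Theta> T) \<and>
     (\<forall>S\<in>A. \<Theta> (adj S) = adj (\<Theta> S))"

definition commutant :: "('h::complex_inner \<Rightarrow> 'h) set \<Rightarrow> ('h \<Rightarrow> 'h) set" where
  "commutant M = {z \<in> BH. \<forall>T\<in>M. z \<circ> T = T \<circ> z}"

definition Ad :: "('h::complex_inner \<Rightarrow> 'h) \<Rightarrow> ('h \<Rightarrow> 'h) \<Rightarrow> ('h \<Rightarrow> 'h)" where
  "Ad v x = v \<circ> x \<circ> adj v"

end

theory Submission
  imports Defs
begin

text \<open>Because \<open>\<phi>\<close> is faithful, the \<open>\<phi>\<close>-adjoint \<open>\<Theta>\<^sup>*\<close> of the \<open>\<phi>\<close>-preserving automorphism \<open>\<Theta>\<close>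
is just \<open>\<Theta>\<^sup>-\<^sup>1\<close>, a unital \<open>*\<close>-homomorphism \<open>\<pi>\<close>. Suppose \<open>\<pi> = \<Sum>\<^sub>i \<Phi>\<^sub>i\<close> with each \<open>\<Phi>\<^sub>i\<close> completely
positive, and apply everything to the positive matrix \<open>[[1, x], [x\<^sup>*, x\<^sup>*x]]\<close>. As \<open>\<pi>\<close> is
multiplicative, its image \<open>[[1, \<pi> x], [\<pi> x\<^sup>*, \<pi> x\<^sup>* \<pi> x]]\<close> has the vector \<open>(\<pi> x h, -h)\<close> in
its kernel, hence so does each positive summand; this says \<open>\<Phi>\<^sub>i(x) = \<Phi>\<^sub>i(1) \<pi>(x)\<close>.
Since 2-positive maps are \<open>*\<close>-preserving, applying this to \<open>x\<^sup>*\<close> and taking adjoints shows that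
\<open>\<Phi>\<^sub>i(1)\<close> commutes with \<open>\<pi>(A)\<close>.\<close>

lemma scaleC_zero_left [simp]: "scaleC 0 (x::'a::complex_inner) = 0"
  using scaleR_scaleC[of 0 x] by simp

lemma scaleC_minus1: "scaleC (-1) (x::'a::complex_inner) = - x"
  using scaleR_scaleC[of "-1" x] by simp

lemma cinner_add_left: "cinner ((x::'a::complex_inner) + y) z = cinner x z + cinner y z"
  by (metis cinner_add_right cinner_commute complex_cnj_add)

lemma cinner_scaleC_left: "cinner (scaleC c (x::'a::complex_inner)) y = cnj c * cinner x y"
  by (metis cinner_scaleC_right cinner_commute complex_cnj_mult)

lemma cinner_zero_right [simp]: "cinner (x::'a::complex_inner) 0 = 0"
  using cinner_add_right[of x 0 0] by simp

lemma cinner_zero_left [simp]: "cinner 0 (x::'a::complex_inner) = 0"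
  using cinner_add_left[of 0 0 x] by simp

lemma cinner_minus_right: "cinner (x::'a::complex_inner) (- y) = - cinner x y"
  using cinner_add_right[of x y "-y"] by (simp add: eq_neg_iff_add_eq_0 add.commute)

lemma cinner_minus_left: "cinner (- (x::'a::complex_inner)) y = - cinner x y"
  using cinner_add_left[of x "-x" y] by (simp add: eq_neg_iff_add_eq_0 add.commute)

lemma cinner_diff_right: "cinner (x::'a::complex_inner) (y - z) = cinner x y - cinner x z"
  using cinner_add_right[of x y "-z"] by (simp add: cinner_minus_right)

lemma cinner_diff_left: "cinner ((x::'a::complex_inner) - y) z = cinner x z - cinner y z"
  using cinner_add_left[of x "-y" z] by (simp add: cinner_minus_left)

lemma cinner_sum_right: "cinner (x::'a::complex_inner) (\<Sum>i\<in>I. f i) = (\<Sum>i\<in>I. cinner x (f i))"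
  by (induction I rule: infinite_finite_induct) (simp_all add: cinner_add_right)

lemma cinner_self_eq_0: "cinner (x::'a::complex_inner) x = 0 \<longleftrightarrow> x = 0"
  using cinner_self_norm[of x] by auto

lemma cinner_ext: "(\<And>\<beta>. cinner \<beta> u = cinner \<beta> (v::'a::complex_inner)) \<Longrightarrow> u = v"
  using cinner_self_eq_0[of "u - v"] by (simp add: cinner_diff_right)

lemma Re_cinner_self: "Re (cinner (x::'a::complex_inner) x) = (norm x)\<^sup>2"
  using cinner_self_norm[of x] by simp

lemma Im_cinner_self: "Im (cinner (x::'a::complex_inner) x) = 0"
  using cinner_self_norm[of x] by simp

lemma cnj_cinner_self: "cnj (cinner (x::'a::complex_inner) x) = cinner x x"
  using cinner_self_norm[of x] by simp

lemma quadratic_form_coeffs_conj: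
  fixes q A B C :: complex
  assumes "\<And>t. Im (q + t * A + cnj t * B + cnj t * t * C) = 0"
  shows "B = cnj A"
proof -
  have "Im q = 0" using assms[of 0] by simp
  moreover have "Im q + Im A + Im B + Im C = 0" using assms[of 1] by simp
  moreover have "Im q - Im A - Im B + Im C = 0" using assms[of "-1"] by simp
  moreover have "Im q + Re A - Re B + Im C = 0" using assms[of "\<i>"] by simp
  ultimately show ?thesis by (simp add: complex_eq_iff)
qed

text \<open>Test with \<open>t = -s B\<close> for a small real \<open>s > 0\<close>: the value is \<open>|B|\<^sup>2 s (s Re C - 2)\<close>.\<close>
lemma quadratic_form_cross_coeff_eq_0:
  fixes A B C :: complex
  assumes "\<And>t. Im (t * A + cnj t * B + cnj t * t * C) = 0"
    and nonneg: "\<And>t. Re (t * A + cnj t * B + cnj t * t * C) \<ge> 0"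
  shows "B = 0"
proof (rule ccontr)
  assume "B \<noteq> 0"
  have A: "A = cnj B" using quadratic_form_coeffs_conj[of 0 A B C] assms(1) by simp
  define s where "s = 1 / (\<bar>Re C\<bar> + 1)"
  have "0 \<le> Re ((- of_real s * B) * A + cnj (- of_real s * B) * B
              + cnj (- of_real s * B) * (- of_real s * B) * C)"
    by (rule nonneg)
  also have "\<dots> = (cmod B)\<^sup>2 * s * (s * Re C - 2)"
    unfolding A cmod_power2 by (simp add: algebra_simps power2_eq_square)
  also have "\<dots> < 0"
  proof (rule mult_pos_neg)
    have "\<bar>Re C\<bar> + 1 > 0" by linarith
    then have "s > 0" and "s * Re C < 1" by (simp_all add: s_def divide_simps)
    then show "(cmod B)\<^sup>2 * s > 0" and "s * Re C - 2 < 0"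
      using \<open>B \<noteq> 0\<close> by simp_all
  qed
  finally show False by simp
qed

lemma cinner_add_scaleC_self:
  "cinner ((a::'a::complex_inner) + scaleC t b) (a + scaleC t b)
     = cinner a a + t * cinner a b + cnj t * cinner b a + cnj t * t * cinner b b"
  by (simp add: cinner_add_left cinner_add_right cinner_scaleC_left cinner_scaleC_right algebra_simps)

lemma norm_add_square:
  "(norm ((a::'a::complex_inner) + b))\<^sup>2 = (norm a)\<^sup>2 + (norm b)\<^sup>2 + 2 * Re (cinner a b)"
proof -
  have "(norm (a + b))\<^sup>2 = Re (cinner (a + b) (a + b))" by (simp add: Re_cinner_self)
  also have "\<dots> = Re (cinner a a) + Re (cinner b b) + Re (cinner a b) + Re (cinner b a)"
    by (simp add: cinner_add_left cinner_add_right)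
  also have "Re (cinner b a) = Re (cinner a b)" using cinner_commute[of a b] by simp
  finally show ?thesis by (simp add: Re_cinner_self)
qed

lemma parallelogram_law:
  "(norm ((a::'a::complex_inner) + b))\<^sup>2 + (norm (a - b))\<^sup>2 = 2 * (norm a)\<^sup>2 + 2 * (norm b)\<^sup>2"
  using norm_add_square[of a b] norm_add_square[of a "-b"] by (simp add: cinner_minus_right)

lemma norm_scaleC: "norm (scaleC c (x::'a::complex_inner)) = cmod c * norm x"
proof -
  have "complex_of_real ((norm (scaleC c x))\<^sup>2) = cnj c * c * complex_of_real ((norm x)\<^sup>2)"
    by (metis cinner_self_norm cinner_scaleC_left cinner_scaleC_right mult.assoc)
  also have "cnj c * c = complex_of_real ((cmod c)\<^sup>2)"
    using complex_norm_square[of c] by (simp add: mult.commute)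
  finally have "(norm (scaleC c x))\<^sup>2 = (cmod c * norm x)\<^sup>2"
    by (metis of_real_eq_iff of_real_mult power_mult_distrib)
  then show ?thesis by (rule power2_eq_imp_eq) simp_all
qed

lemma cauchy_schwarz_cinner: "cmod (cinner (x::'a::complex_inner) y) \<le> norm x * norm y"
proof (cases "x = 0")
  case True
  then show ?thesis by simp
next
  case False
  define c where "c = cinner x y / cinner x x"
  define z where "z = y - scaleC c x"
  have xx: "cinner x x \<noteq> 0" using False cinner_self_eq_0 by blast
  have xz: "cinner x z = 0"
    unfolding z_def c_def using xx by (simp add: cinner_diff_right cinner_scaleC_right)
  have zx: "cinner z x = 0" using xz cinner_commute[of z x] by simp
  have "cinner y y = cinner z z + cnj c * c * cinner x x"
    using cinner_add_scaleC_self[of z c x] xz zx by (simp add: z_def)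
  then have "(norm y)\<^sup>2 = (norm z)\<^sup>2 + (cmod c * norm x)\<^sup>2"
    by (metis Re_complex_of_real cinner_scaleC_left cinner_scaleC_right cinner_self_norm
        norm_scaleC mult.assoc plus_complex.sel(1))
  then have cx_le: "(cmod c * norm x)\<^sup>2 \<le> (norm y)\<^sup>2" by simp
  have "cmod (cinner x y) = cmod c * (norm x)\<^sup>2"
    using False cinner_self_norm[of x] by (simp add: c_def norm_divide norm_power)
  then have "(cmod (cinner x y))\<^sup>2 = (cmod c * norm x)\<^sup>2 * (norm x)\<^sup>2"
    by (simp add: power2_eq_square)
  also have "\<dots> \<le> (norm y)\<^sup>2 * (norm x)\<^sup>2" using cx_le by (rule mult_right_mono) simp
  also have "\<dots> = (norm x * norm y)\<^sup>2" by (simp add: power_mult_distrib)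
  finally show ?thesis by (simp add: power2_le_iff_abs_le)
qed

section \<open>The Riesz representation theorem\<close>

lemma Cauchy_minimizing_sequence:
  fixes n :: "nat \<Rightarrow> 'a::complex_inner"
  assumes "convex N" and n_in: "\<And>k. n k \<in> N"
    and d_le: "\<And>m. m \<in> N \<Longrightarrow> d \<le> norm (v - m)"
    and lim: "(\<lambda>k. norm (v - n k)) \<longlonglongrightarrow> d"
  shows "Cauchy n"
proof (rule metric_CauchyI)
  fix \<epsilon> :: real
  assume "\<epsilon> > 0"
  have d_nonneg: "0 \<le> d" using LIMSEQ_le_const[OF lim] by simp
  have bound: "(norm (n k - n l))\<^sup>2 \<le> 2 * (norm (v - n k))\<^sup>2 + 2 * (norm (v - n l))\<^sup>2 - 4 * d\<^sup>2"
    for k l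
  proof -
    have "scaleR (1/2) (n k) + scaleR (1/2) (n l) \<in> N"
      using \<open>convex N\<close> n_in by (intro convexD) auto
    then have "d \<le> norm (v - (scaleR (1/2) (n k) + scaleR (1/2) (n l)))" by (rule d_le)
    also have "v - (scaleR (1/2) (n k) + scaleR (1/2) (n l)) = scaleR (1/2) ((v - n k) + (v - n l))"
      by (simp add: algebra_simps flip: scaleR_add_left)
    finally have "d \<le> norm ((v - n k) + (v - n l)) / 2" by simp
    then have "(2 * d)\<^sup>2 \<le> (norm ((v - n k) + (v - n l)))\<^sup>2"
      using d_nonneg by (intro power_mono) auto
    moreover have "norm ((v - n k) - (v - n l)) = norm (n k - n l)"
      by (simp add: norm_minus_commute)
    ultimately show ?thesis
      using parallelogram_law[of "v - n k" "v - n l"] by (simp add: power_mult_distrib)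
  qed
  have "(\<lambda>k. (norm (v - n k))\<^sup>2) \<longlonglongrightarrow> d\<^sup>2" by (intro tendsto_power lim)
  then have "eventually (\<lambda>k. (norm (v - n k))\<^sup>2 < d\<^sup>2 + \<epsilon>\<^sup>2 / 4) sequentially"
    using \<open>\<epsilon> > 0\<close> by (intro order_tendstoD(2)) auto
  then obtain M where M: "\<And>k. k \<ge> M \<Longrightarrow> (norm (v - n k))\<^sup>2 < d\<^sup>2 + \<epsilon>\<^sup>2 / 4"
    unfolding eventually_sequentially by blast
  have "dist (n k) (n l) < \<epsilon>" if "k \<ge> M" "l \<ge> M" for k l
  proof -
    have "(norm (n k - n l))\<^sup>2 < \<epsilon>\<^sup>2" using bound[of k l] M[OF that(1)] M[OF that(2)] by simp
    then show ?thesis using \<open>\<epsilon> > 0\<close> by (simp add: dist_norm power_less_imp_less_base)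
  qed
  then show "\<exists>M. \<forall>k\<ge>M. \<forall>l\<ge>M. dist (n k) (n l) < \<epsilon>" by blast
qed

lemma closest_point_exists:
  fixes v :: "'a::chilbert_space"
  assumes "closed N" "convex N" "N \<noteq> {}"
  shows "\<exists>l\<in>N. \<forall>m\<in>N. norm (v - l) \<le> norm (v - m)"
proof -
  define D where "D = (\<lambda>m. norm (v - m)) ` N"
  define d where "d = Inf D"
  have bdd: "bdd_below D" unfolding D_def by (rule bdd_belowI[of _ 0]) auto
  have d_le: "d \<le> norm (v - m)" if "m \<in> N" for m
    unfolding d_def D_def using bdd that by (auto simp: D_def intro: cInf_lower)
  have "\<exists>m\<in>N. norm (v - m) < d + inverse (real (Suc k))" for k
  proof -
    have "Inf D < d + inverse (real (Suc k))" by (simp add: d_def)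
    then show ?thesis using cInf_lessD[of D] \<open>N \<noteq> {}\<close> by (auto simp: D_def)
  qed
  then obtain n where n_in: "\<And>k. n k \<in> N"
    and n_close: "\<And>k. norm (v - n k) < d + inverse (real (Suc k))" by metis
  have lim: "(\<lambda>k. norm (v - n k)) \<longlonglongrightarrow> d"
  proof (rule real_tendsto_sandwich)
    show "\<forall>\<^sub>F k in sequentially. d \<le> norm (v - n k)" using d_le n_in by simp
    show "\<forall>\<^sub>F k in sequentially. norm (v - n k) \<le> d + inverse (real (Suc k))"
      using n_close by (simp add: less_imp_le)
    show "(\<lambda>k. d + inverse (real (Suc k))) \<longlonglongrightarrow> d"
      using tendsto_add[OF tendsto_const LIMSEQ_inverse_real_of_nat] by simp
  qed simp
  have "Cauchy n" using Cauchy_minimizing_sequence[OF \<open>convex N\<close> n_in d_le lim] .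
  then obtain l where n_lim: "n \<longlonglongrightarrow> l" using Cauchy_convergent_iff convergent_def by blast
  have "l \<in> N" using closed_sequentially[OF \<open>closed N\<close> n_in n_lim] .
  moreover have "(\<lambda>k. norm (v - n k)) \<longlonglongrightarrow> norm (v - l)"
    by (intro tendsto_intros n_lim)
  then have "norm (v - l) = d" using lim LIMSEQ_unique by blast
  ultimately show ?thesis using d_le by blast
qed

lemma closest_point_orthogonal:
  fixes w :: "'a::complex_inner"
  assumes min: "\<And>u. u \<in> N \<Longrightarrow> norm w \<le> norm (w + u)"
    and scaleC_in: "\<And>c u. u \<in> N \<Longrightarrow> scaleC c u \<in> N" and "m \<in> N"
  shows "cinner m w = 0"
proof (rule quadratic_form_cross_coeff_eq_0)
  fix t
  have "(norm w)\<^sup>2 \<le> (norm (w + scaleC t m))\<^sup>2"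
    using min[OF scaleC_in[OF \<open>m \<in> N\<close>]] by (simp add: power_mono)
  moreover have "t * cinner w m + cnj t * cinner m w + cnj t * t * cinner m m
      = cinner (w + scaleC t m) (w + scaleC t m) - cinner w w"
    by (simp add: cinner_add_scaleC_self)
  ultimately show "Im (t * cinner w m + cnj t * cinner m w + cnj t * t * cinner m m) = 0"
    and "0 \<le> Re (t * cinner w m + cnj t * cinner m w + cnj t * t * cinner m m)"
    by (simp_all add: Re_cinner_self Im_cinner_self)
qed

theorem riesz_representation:
  fixes f :: "'a::chilbert_space \<Rightarrow> complex"
  assumes add: "\<And>x y. f (x + y) = f x + f y"
    and scaleC: "\<And>c x. f (scaleC c x) = c * f x"
    and bounded: "\<And>x. cmod (f x) \<le> K * norm x"
  shows "\<exists>y. \<forall>x. f x = cinner y x"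
proof (cases "\<forall>x. f x = 0")
  case True
  then show ?thesis by (intro exI[of _ 0]) simp
next
  case False
  then obtain v where "f v \<noteq> 0" by blast
  have diff: "f (x - y) = f x - f y" for x y
    using add[of x "scaleC (-1) y"] scaleC[of "-1" y] by (simp add: scaleC_minus1)
  define N where "N = {x. f x = 0}"
  have "bounded_linear f"
    by (rule bounded_linear_intro[of _ K])
      (simp_all add: add scaleR_scaleC scaleC bounded mult.commute scaleR_conv_of_real)
  then have "closed N"
    unfolding N_def by (intro closed_Collect_eq continuous_on_const) (simp add: linear_continuous_on)
  moreover have "convex N"
    by (rule convexI) (simp add: N_def add scaleR_scaleC scaleC)
  moreover have "0 \<in> N" using scaleC[of 0 0] by (simp add: N_def)
  ultimately obtain l where "l \<in> N" and l_min: "\<And>m. m \<in> N \<Longrightarrow> norm (v - l) \<le> norm (v - m)"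
    using closest_point_exists[of N v] by blast
  define w where "w = v - l"
  have orth: "cinner m w = 0" if "m \<in> N" for m
  proof (rule closest_point_orthogonal[OF _ _ that])
    show "norm w \<le> norm (w + u)" if "u \<in> N" for u
      using l_min[of "l - u"] \<open>l \<in> N\<close> that by (simp add: N_def diff w_def algebra_simps)
  qed (simp add: N_def scaleC)
  have "f w \<noteq> 0" using \<open>f v \<noteq> 0\<close> \<open>l \<in> N\<close> by (simp add: w_def diff N_def)
  then have ww: "cinner w w \<noteq> 0" using cinner_self_eq_0[of w] scaleC[of 0 0] by auto
  have "f x = cinner (scaleC (cnj (f w) / cinner w w) w) x" for x
  proof -
    have "scaleC (f w) x - scaleC (f x) w \<in> N"
      by (simp add: N_def diff scaleC)
    then have "cinner (scaleC (f w) x - scaleC (f x) w) w = 0" by (rule orth)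
    then have "cnj (cnj (f w) * cinner x w - cnj (f x) * cinner w w) = 0"
      by (simp add: cinner_diff_left cinner_scaleC_left)
    then have "f w * cinner w x = f x * cinner w w"
      using cinner_commute[of w x] cnj_cinner_self[of w] by simp
    then show ?thesis using ww cnj_cinner_self[of w] by (simp add: cinner_scaleC_left field_simps)
  qed
  then show ?thesis by blast
qed

lemma BH_add: "T \<in> BH \<Longrightarrow> T (x + y) = T x + T y"
  by (simp add: BH_def clinear_op_def)

lemma BH_scaleC: "T \<in> BH \<Longrightarrow> T (scaleC c x) = scaleC c (T x)"
  by (simp add: BH_def clinear_op_def)

lemma BH_minus: "T \<in> BH \<Longrightarrow> T (- x) = - T x"
  using BH_scaleC[of T "-1" x] by (simp add: scaleC_minus1)

lemma id_BH: "(id :: 'h::complex_inner \<Rightarrow> 'h) \<in> BH"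
  unfolding BH_def clinear_op_def by (auto intro: exI[of _ 1])

lemma adjoint_exists:
  fixes T :: "'h::chilbert_space \<Rightarrow> 'h"
  assumes "T \<in> BH"
  shows "\<exists>S. \<forall>x y. cinner (T x) y = cinner x (S y)"
proof -
  obtain K where K: "\<And>x. norm (T x) \<le> K * norm x" using assms by (auto simp: BH_def)
  have "\<exists>u. \<forall>x. cinner y (T x) = cinner u x" for y
  proof (rule riesz_representation[where K = "norm y * K"])
    show "cmod (cinner y (T x)) \<le> norm y * K * norm x" for x
      using cauchy_schwarz_cinner[of y "T x"] mult_left_mono[OF K[of x], of "norm y"]
      by (simp add: mult.assoc)
  qed (simp_all add: BH_add[OF assms] BH_scaleC[OF assms] cinner_add_right cinner_scaleC_right)
  then obtain S where "\<And>y x. cinner y (T x) = cinner (S y) x" by metis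
  then have "\<forall>x y. cinner (T x) y = cinner x (S y)" by (metis cinner_commute)
  then show ?thesis by blast
qed

lemma cinner_adj_right:
  fixes T :: "'h::chilbert_space \<Rightarrow> 'h"
  assumes "T \<in> BH"
  shows "cinner (T x) y = cinner x (adj T y)"
  using someI_ex[OF adjoint_exists[OF assms]] unfolding adj_def by blast

lemma cinner_adj_left:
  fixes T :: "'h::chilbert_space \<Rightarrow> 'h"
  assumes "T \<in> BH"
  shows "cinner x (T y) = cinner (adj T x) y"
  by (metis cinner_adj_right[OF assms] cinner_commute)

lemma adj_id: "adj (id :: 'h::chilbert_space \<Rightarrow> 'h) = id"
  by (intro ext cinner_ext) (simp flip: cinner_adj_right[OF id_BH])

section \<open>Positive operator matrices\<close>

definition opmat_form :: "nat \<Rightarrow> (nat \<Rightarrow> nat \<Rightarrow> ('h::complex_inner \<Rightarrow> 'h)) \<Rightarrow> (nat \<Rightarrow> 'h) \<Rightarrow> complex" where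
  "opmat_form n X \<xi> = (\<Sum>i<n. \<Sum>j<n. cinner (\<xi> i) (X i j (\<xi> j)))"

lemma pos_opmat_iff_form:
  "pos_opmat n X \<longleftrightarrow> (\<forall>\<xi>. Im (opmat_form n X \<xi>) = 0 \<and> Re (opmat_form n X \<xi>) \<ge> 0)"
  by (simp add: pos_opmat_def opmat_form_def)

lemma opmat_form_2:
  "opmat_form 2 X \<xi> = cinner (\<xi> 0) (X 0 0 (\<xi> 0)) + cinner (\<xi> 0) (X 0 1 (\<xi> 1))
     + cinner (\<xi> 1) (X 1 0 (\<xi> 0)) + cinner (\<xi> 1) (X 1 1 (\<xi> 1))"
  by (simp add: opmat_form_def eval_nat_numeral)

lemma opmat_form_sum:
  "opmat_form n (\<lambda>i j h. \<Sum>k\<in>I. X k i j h) \<xi> = (\<Sum>k\<in>I. opmat_form n (X k) \<xi>)"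
proof -
  have "opmat_form n (\<lambda>i j h. \<Sum>k\<in>I. X k i j h) \<xi>
      = (\<Sum>i<n. \<Sum>j<n. \<Sum>k\<in>I. cinner (\<xi> i) (X k i j (\<xi> j)))"
    by (simp add: opmat_form_def cinner_sum_right)
  also have "\<dots> = (\<Sum>i<n. \<Sum>k\<in>I. \<Sum>j<n. cinner (\<xi> i) (X k i j (\<xi> j)))"
    by (intro sum.cong refl sum.swap)
  also have "\<dots> = (\<Sum>k\<in>I. opmat_form n (X k) \<xi>)"
    unfolding opmat_form_def by (rule sum.swap)
  finally show ?thesis .
qed

lemma opmat_form_sum_eq_0:
  assumes "finite I" "\<And>k. k \<in> I \<Longrightarrow> pos_opmat n (X k)"
    and "opmat_form n (\<lambda>i j h. \<Sum>k\<in>I. X k i j h) \<xi> = 0" and "k \<in> I"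
  shows "opmat_form n (X k) \<xi> = 0"
proof -
  have nonneg: "Im (opmat_form n (X k) \<xi>) = 0 \<and> Re (opmat_form n (X k) \<xi>) \<ge> 0" if "k \<in> I" for k
    using assms(2)[OF that] unfolding pos_opmat_iff_form by blast
  have "(\<Sum>k\<in>I. Re (opmat_form n (X k) \<xi>)) = 0"
    using assms(3) unfolding opmat_form_sum Re_sum[symmetric] by simp
  then have "\<forall>k\<in>I. Re (opmat_form n (X k) \<xi>) = 0"
    using sum_nonneg_eq_0_iff[OF \<open>finite I\<close>, of "\<lambda>k. Re (opmat_form n (X k) \<xi>)"] nonneg
    by simp
  then show ?thesis using nonneg[OF \<open>k \<in> I\<close>] \<open>k \<in> I\<close> by (simp add: complex_eq_iff)
qed

lemma pos_opmat_Ad: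
  fixes a :: "'h::chilbert_space \<Rightarrow> 'h"
  assumes "a \<in> BH" and "pos_opmat n X"
  shows "pos_opmat n (\<lambda>i j. Ad a (X i j))"
proof -
  have "opmat_form n (\<lambda>i j. Ad a (X i j)) \<xi> = opmat_form n X (\<lambda>i. adj a (\<xi> i))" for \<xi>
    unfolding opmat_form_def Ad_def by (simp add: cinner_adj_left[OF \<open>a \<in> BH\<close>])
  then show ?thesis using \<open>pos_opmat n X\<close> unfolding pos_opmat_iff_form by simp
qed

text \<open>The operator matrix \<open>[[1, y], [y\<^sup>*, y\<^sup>*y]] = [1 y]\<^sup>* [1 y]\<close>.\<close>
definition gram_matrix :: "('h::complex_inner \<Rightarrow> 'h) \<Rightarrow> nat \<Rightarrow> nat \<Rightarrow> ('h \<Rightarrow> 'h)" where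
  "gram_matrix y i j =
     (if i = 0 then (if j = 0 then id else y) else (if j = 0 then adj y else adj y \<circ> y))"

lemma opmat_form_gram_matrix:
  fixes y :: "'h::chilbert_space \<Rightarrow> 'h"
  assumes "y \<in> BH"
  shows "opmat_form 2 (gram_matrix y) \<xi> = cinner (\<xi> 0 + y (\<xi> 1)) (\<xi> 0 + y (\<xi> 1))"
  by (simp add: opmat_form_2 gram_matrix_def cinner_adj_right[OF assms]
      cinner_add_left cinner_add_right)

lemma pos_opmat_gram_matrix:
  fixes y :: "'h::chilbert_space \<Rightarrow> 'h"
  assumes "y \<in> BH"
  shows "pos_opmat 2 (gram_matrix y)"
  unfolding pos_opmat_iff_form opmat_form_gram_matrix[OF assms]
  by (simp add: Im_cinner_self Re_cinner_self)

text \<open>Replacing \<open>\<xi>\<^sub>0\<close> by \<open>\<xi>\<^sub>0 + t u\<close>, where \<open>u\<close> is the first component of \<open>M \<xi>\<close>, gives a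
nonnegative quadratic function of \<open>t\<close> whose coefficient of \<open>cnj t\<close> is \<open>\<parallel>u\<parallel>\<^sup>2\<close>.\<close>
lemma pos_opmat_2_form_eq_0:
  fixes M :: "nat \<Rightarrow> nat \<Rightarrow> ('h::chilbert_space \<Rightarrow> 'h)"
  assumes "M 0 0 \<in> BH" "M 1 0 \<in> BH"
    and pos: "pos_opmat 2 M" and zero: "opmat_form 2 M \<xi> = 0"
  shows "M 0 0 (\<xi> 0) + M 0 1 (\<xi> 1) = 0"
proof -
  define u where "u = M 0 0 (\<xi> 0) + M 0 1 (\<xi> 1)"
  define A where "A = cinner (\<xi> 0) (M 0 0 u) + cinner (\<xi> 1) (M 1 0 u)"
  have expand: "opmat_form 2 M (\<xi>(0 := \<xi> 0 + scaleC t u))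
      = opmat_form 2 M \<xi> + t * A + cnj t * cinner u u + cnj t * t * cinner u (M 0 0 u)" for t
  proof -
    have "opmat_form 2 M (\<xi>(0 := \<xi> 0 + scaleC t u))
        = opmat_form 2 M \<xi> + t * A + cnj t * cinner u (M 0 0 (\<xi> 0) + M 0 1 (\<xi> 1))
          + cnj t * t * cinner u (M 0 0 u)"
      unfolding opmat_form_2 A_def
      by (simp add: BH_add[OF assms(1)] BH_scaleC[OF assms(1)] BH_add[OF assms(2)[simplified]]
          BH_scaleC[OF assms(2)[simplified]] cinner_add_left cinner_add_right cinner_scaleC_left
          cinner_scaleC_right algebra_simps)
    then show ?thesis by (simp add: u_def)
  qed
  have "cinner u u = 0"
  proof (rule quadratic_form_cross_coeff_eq_0)
    fix t
    have "Im (opmat_form 2 M (\<xi>(0 := \<xi> 0 + scaleC t u))) = 0 \<and>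
          Re (opmat_form 2 M (\<xi>(0 := \<xi> 0 + scaleC t u))) \<ge> 0"
      using pos unfolding pos_opmat_iff_form by blast
    then show "Im (t * A + cnj t * cinner u u + cnj t * t * cinner u (M 0 0 u)) = 0"
      and "Re (t * A + cnj t * cinner u u + cnj t * t * cinner u (M 0 0 u)) \<ge> 0"
      unfolding expand zero by simp_all
  qed
  then show ?thesis using cinner_self_eq_0 u_def by blast
qed

lemma pos_opmat_2_hermitian:
  fixes M :: "nat \<Rightarrow> nat \<Rightarrow> ('h::chilbert_space \<Rightarrow> 'h)"
  assumes "M 0 1 \<in> BH" "M 1 1 \<in> BH" and "pos_opmat 2 M"
  shows "cinner \<beta> (M 1 0 \<alpha>) = cnj (cinner \<alpha> (M 0 1 \<beta>))"
proof (rule quadratic_form_coeffs_conj)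
  fix t
  have "Im (opmat_form 2 M (\<lambda>j. if j = 0 then \<alpha> else scaleC t \<beta>)) = 0"
    using \<open>pos_opmat 2 M\<close> unfolding pos_opmat_iff_form by blast
  then show "Im (cinner \<alpha> (M 0 0 \<alpha>) + t * cinner \<alpha> (M 0 1 \<beta>) + cnj t * cinner \<beta> (M 1 0 \<alpha>)
       + cnj t * t * cinner \<beta> (M 1 1 \<beta>)) = 0"
    using assms(1,2)
    by (simp add: opmat_form_2 BH_scaleC cinner_scaleC_left cinner_scaleC_right algebra_simps)
qed

lemma
  assumes "cstar_subalg A"
  shows cstar_subalg_BH: "S \<in> A \<Longrightarrow> S \<in> BH"
    and cstar_subalg_id: "id \<in> A"
    and cstar_subalg_add: "S \<in> A \<Longrightarrow> T \<in> A \<Longrightarrow> (\<lambda>x. S x + T x) \<in> A"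
    and cstar_subalg_comp: "S \<in> A \<Longrightarrow> T \<in> A \<Longrightarrow> S \<circ> T \<in> A"
    and cstar_subalg_scaleC: "S \<in> A \<Longrightarrow> (\<lambda>x. scaleC c (S x)) \<in> A"
    and cstar_subalg_adj: "S \<in> A \<Longrightarrow> adj S \<in> A"
  using assms unfolding cstar_subalg_def by blast+

definition unital_star_hom :: "('h::complex_inner \<Rightarrow> 'h) set \<Rightarrow> (('h \<Rightarrow> 'h) \<Rightarrow> ('h \<Rightarrow> 'h)) \<Rightarrow> bool" where
  "unital_star_hom A \<pi> \<longleftrightarrow> \<pi> ` A \<subseteq> A \<and> \<pi> id = id \<and>
     (\<forall>S\<in>A. \<forall>T\<in>A. \<pi> (S \<circ> T) = \<pi> S \<circ> \<pi> T) \<and> (\<forall>S\<in>A. \<pi> (adj S) = adj (\<pi> S))"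

lemma star_automorphism_id:
  assumes "star_automorphism A \<Theta>" and "id \<in> A"
  shows "\<Theta> id = id"
proof -
  obtain s where "s \<in> A" "\<Theta> s = id"
    using assms unfolding star_automorphism_def bij_betw_def by (metis imageE)
  then have "\<Theta> s = \<Theta> id \<circ> \<Theta> s"
    using assms unfolding star_automorphism_def by (metis id_comp)
  then show ?thesis using \<open>\<Theta> s = id\<close> by simp
qed

text \<open>With \<open>w = \<Theta>\<^sup>-\<^sup>1(x)\<close> and \<open>D = \<Theta>\<^sup>*(x) - w\<close> one gets \<open>\<phi>(y\<^sup>* D) = 0\<close> for all \<open>y \<in> A\<close>;
taking \<open>y = D\<close>, faithfulness forces \<open>D = 0\<close>.\<close>
lemma state_adjoint_inverts_automorphism:
  assumes A: "cstar_subalg A" and \<phi>: "faithful_state A \<phi>" and \<Theta>: "star_automorphism A \<Theta>"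
    and invariant: "\<forall>x\<in>A. \<phi> (\<Theta> x) = \<phi> x" and "\<Theta>s ` A \<subseteq> A"
    and adjoint: "\<forall>x\<in>A. \<forall>y\<in>A. \<phi> (adj y \<circ> \<Theta>s x) = \<phi> (adj (\<Theta> y) \<circ> x)"
    and "x \<in> A"
  shows "\<Theta> (\<Theta>s x) = x"
proof -
  obtain w where "w \<in> A" and "\<Theta> w = x"
    using \<Theta> \<open>x \<in> A\<close> unfolding star_automorphism_def bij_betw_def by (metis imageE)
  have "\<Theta>s x \<in> A" using \<open>\<Theta>s ` A \<subseteq> A\<close> \<open>x \<in> A\<close> by blast
  define D where "D = (\<lambda>h. \<Theta>s x h + scaleC (-1) (w h))"
  have \<phi>_add: "\<And>S T. S \<in> A \<Longrightarrow> T \<in> A \<Longrightarrow> \<phi> (\<lambda>x. S x + T x) = \<phi> S + \<phi> T"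
    and \<phi>_scaleC: "\<And>S c. S \<in> A \<Longrightarrow> \<phi> (\<lambda>x. scaleC c (S x)) = c * \<phi> S"
    and \<phi>_faithful: "\<And>T. T \<in> A \<Longrightarrow> \<phi> (adj T \<circ> T) = 0 \<Longrightarrow> T = (\<lambda>_. 0)"
    using \<phi> unfolding faithful_state_def by blast+
  have "D \<in> A"
    unfolding D_def using A \<open>\<Theta>s x \<in> A\<close> \<open>w \<in> A\<close> by (intro cstar_subalg_add cstar_subalg_scaleC)
  have "\<phi> (adj y \<circ> D) = 0" if "y \<in> A" for y
  proof -
    have "adj y \<in> A" using A that by (rule cstar_subalg_adj)
    then have yx: "adj y \<circ> \<Theta>s x \<in> A" and yw: "adj y \<circ> w \<in> A"
      using A \<open>\<Theta>s x \<in> A\<close> \<open>w \<in> A\<close> by (simp_all add: cstar_subalg_comp)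
    have yw': "(\<lambda>h. scaleC (-1) ((adj y \<circ> w) h)) \<in> A"
      using A yw by (rule cstar_subalg_scaleC)
    have "adj y \<circ> D = (\<lambda>h. (adj y \<circ> \<Theta>s x) h + scaleC (-1) ((adj y \<circ> w) h))"
      unfolding D_def using cstar_subalg_BH[OF A \<open>adj y \<in> A\<close>]
      by (simp add: fun_eq_iff BH_add BH_scaleC)
    then have "\<phi> (adj y \<circ> D) = \<phi> (adj y \<circ> \<Theta>s x) + \<phi> (\<lambda>h. scaleC (-1) ((adj y \<circ> w) h))"
      using \<phi>_add[OF yx yw'] by simp
    also have "\<phi> (\<lambda>h. scaleC (-1) ((adj y \<circ> w) h)) = - \<phi> (adj y \<circ> w)"
      using \<phi>_scaleC[OF yw] by simp
    also have "\<phi> (adj y \<circ> \<Theta>s x) = \<phi> (\<Theta> (adj y \<circ> w))"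
      using adjoint \<Theta> \<open>x \<in> A\<close> that \<open>adj y \<in> A\<close> \<open>w \<in> A\<close> \<open>\<Theta> w = x\<close>
      unfolding star_automorphism_def by metis
    also have "\<dots> = \<phi> (adj y \<circ> w)" using invariant yw by blast
    finally show ?thesis by (simp only: add.right_inverse)
  qed
  then have "D = (\<lambda>_. 0)" using \<phi>_faithful \<open>D \<in> A\<close> by blast
  then have "\<Theta>s x = w" by (auto simp: fun_eq_iff D_def scaleC_minus1)
  then show ?thesis using \<open>\<Theta> w = x\<close> by simp
qed

lemma unital_star_hom_right_inverse:
  assumes A: "cstar_subalg A" and \<Theta>: "star_automorphism A \<Theta>"
    and "\<pi> ` A \<subseteq> A" and right_inverse: "\<And>x. x \<in> A \<Longrightarrow> \<Theta> (\<pi> x) = x"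
  shows "unital_star_hom A \<pi>"
proof -
  have \<pi>_in: "\<pi> x \<in> A" if "x \<in> A" for x using \<open>\<pi> ` A \<subseteq> A\<close> that by blast
  have inj: "S = T" if "S \<in> A" "T \<in> A" "\<Theta> S = \<Theta> T" for S T
    using \<Theta> that unfolding star_automorphism_def bij_betw_def inj_on_def by blast
  have mult: "\<Theta> (S \<circ> T) = \<Theta> S \<circ> \<Theta> T" if "S \<in> A" "T \<in> A" for S T
    using \<Theta> that unfolding star_automorphism_def by blast
  have star: "\<Theta> (adj S) = adj (\<Theta> S)" if "S \<in> A" for S
    using \<Theta> that unfolding star_automorphism_def by blast
  have "\<pi> id = id"
    using inj[OF \<pi>_in cstar_subalg_id] right_inverse star_automorphism_id[OF \<Theta>] A
    by (simp add: cstar_subalg_id)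
  moreover have "\<pi> (S \<circ> T) = \<pi> S \<circ> \<pi> T" if "S \<in> A" "T \<in> A" for S T
    using inj[OF \<pi>_in cstar_subalg_comp[OF A \<pi>_in \<pi>_in]] that mult[OF \<pi>_in \<pi>_in]
      right_inverse cstar_subalg_comp[OF A] by simp
  moreover have "\<pi> (adj S) = adj (\<pi> S)" if "S \<in> A" for S
    using inj[OF \<pi>_in cstar_subalg_adj[OF A \<pi>_in]] that star[OF \<pi>_in]
      right_inverse cstar_subalg_adj[OF A] by simp
  ultimately show ?thesis using \<open>\<pi> ` A \<subseteq> A\<close> unfolding unital_star_hom_def by blast
qed

lemma gram_matrix_in:
  assumes "cstar_subalg A" "x \<in> A"
  shows "gram_matrix x i j \<in> A"
  using assms by (simp add: gram_matrix_def cstar_subalg_id cstar_subalg_adj cstar_subalg_comp)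

lemma unital_star_hom_gram_matrix:
  assumes "cstar_subalg A" "unital_star_hom A \<pi>" "x \<in> A"
  shows "\<pi> (gram_matrix x i j) = gram_matrix (\<pi> x) i j"
  using assms by (simp add: gram_matrix_def unital_star_hom_def cstar_subalg_adj)

lemma complete_positive_in:
  "complete_positive A \<Phi> \<Longrightarrow> x \<in> A \<Longrightarrow> \<Phi> x \<in> A"
  unfolding complete_positive_def linear_map_on_def by blast

lemma complete_positive_gram_matrix:
  assumes "cstar_subalg A" "complete_positive A \<Phi>" "x \<in> A"
  shows "pos_opmat 2 (\<lambda>i j. \<Phi> (gram_matrix x i j))"
  using assms pos_opmat_gram_matrix[OF cstar_subalg_BH] gram_matrix_in
  unfolding complete_positive_def by blast

lemma complete_positive_Ad:
  assumes A: "cstar_subalg A" and \<Psi>: "complete_positive A \<Psi>" and "a \<in> A"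
  shows "complete_positive A (\<lambda>x. Ad a (\<Psi> x))"
  unfolding complete_positive_def linear_map_on_def
proof (intro conjI ballI allI impI image_subsetI)
  have a: "a \<in> BH" "adj a \<in> A" using A \<open>a \<in> A\<close> by (simp_all add: cstar_subalg_BH cstar_subalg_adj)
  show "Ad a (\<Psi> x) \<in> A" if "x \<in> A" for x
    unfolding Ad_def using A \<open>a \<in> A\<close> a(2) complete_positive_in[OF \<Psi> that]
    by (intro cstar_subalg_comp[OF A])
  fix S T c assume "S \<in> A" "T \<in> A"
  then have "\<Psi> (\<lambda>x. S x + T x) = (\<lambda>x. \<Psi> S x + \<Psi> T x)"
    and "\<Psi> (\<lambda>x. scaleC c (S x)) = (\<lambda>x. scaleC c (\<Psi> S x))"
    using \<Psi> unfolding complete_positive_def linear_map_on_def by blast+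
  then show "Ad a (\<Psi> (\<lambda>x. S x + T x)) = (\<lambda>x. Ad a (\<Psi> S) x + Ad a (\<Psi> T) x)"
    and "Ad a (\<Psi> (\<lambda>x. scaleC c (S x))) = (\<lambda>x. scaleC c (Ad a (\<Psi> S) x))"
    by (simp_all add: Ad_def BH_add[OF a(1)] BH_scaleC[OF a(1)] comp_def)
next
  fix n X assume "(\<forall>i<n. \<forall>j<n. X i j \<in> A) \<and> pos_opmat n X"
  then have "pos_opmat n (\<lambda>i j. \<Psi> (X i j))" using \<Psi> unfolding complete_positive_def by blast
  then show "pos_opmat n (\<lambda>i j. Ad a (\<Psi> (X i j)))"
    using pos_opmat_Ad cstar_subalg_BH[OF A \<open>a \<in> A\<close>] by blast
qed

lemma complete_positive_adj:
  fixes A :: "('h::chilbert_space \<Rightarrow> 'h) set"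
  assumes A: "cstar_subalg A" and \<Phi>: "complete_positive A \<Phi>" and "x \<in> A"
  shows "\<Phi> (adj x) = adj (\<Phi> x)"
proof (intro ext cinner_ext)
  fix \<alpha> \<beta>
  have BH: "\<Phi> (gram_matrix x i j) \<in> BH" for i j
    using cstar_subalg_BH[OF A complete_positive_in[OF \<Phi> gram_matrix_in[OF A \<open>x \<in> A\<close>]]] .
  have "cinner \<beta> (\<Phi> (adj x) \<alpha>) = cnj (cinner \<alpha> (\<Phi> x \<beta>))"
    using pos_opmat_2_hermitian[of "\<lambda>i j. \<Phi> (gram_matrix x i j)", OF BH BH
        complete_positive_gram_matrix[OF A \<Phi> \<open>x \<in> A\<close>]]
    by (simp add: gram_matrix_def)
  also have "\<dots> = cinner \<beta> (adj (\<Phi> x) \<alpha>)"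
    using BH[of 0 1] by (simp add: gram_matrix_def cinner_adj_right flip: cinner_commute)
  finally show "cinner \<beta> (\<Phi> (adj x) \<alpha>) = cinner \<beta> (adj (\<Phi> x) \<alpha>)" .
qed

section \<open>Completely positive summands of a \<open>*\<close>-homomorphism\<close>

locale star_hom_cp_decomposition =
  fixes A :: "('h::chilbert_space \<Rightarrow> 'h) set"
    and \<pi> :: "('h \<Rightarrow> 'h) \<Rightarrow> ('h \<Rightarrow> 'h)"
    and \<Phi> :: "nat \<Rightarrow> ('h \<Rightarrow> 'h) \<Rightarrow> ('h \<Rightarrow> 'h)"
    and m :: nat
  assumes cstar: "cstar_subalg A"
    and hom: "unital_star_hom A \<pi>"
    and cp: "\<And>i. i < m \<Longrightarrow> complete_positive A (\<Phi> i)"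
    and decomposition: "\<And>x. x \<in> A \<Longrightarrow> \<pi> x = (\<lambda>h. \<Sum>i<m. \<Phi> i x h)"
begin

lemma \<pi>_in: "x \<in> A \<Longrightarrow> \<pi> x \<in> A"
  using hom unfolding unital_star_hom_def by blast

lemma \<Phi>_BH: "i < m \<Longrightarrow> x \<in> A \<Longrightarrow> \<Phi> i x \<in> BH"
  using cstar cp by (simp add: cstar_subalg_BH complete_positive_in)

text \<open>The vector \<open>(\<pi> x h, -h)\<close> is a null vector of \<open>\<pi>\<close> applied to the Gram matrix of \<open>x\<close>,
hence of each positive summand.\<close>
lemma summand_factorization:
  assumes "i < m" "x \<in> A"
  shows "\<Phi> i x = \<Phi> i id \<circ> \<pi> x"
proof
  fix h
  define \<xi> where "\<xi> = (\<lambda>j::nat. if j = 0 then \<pi> x h else - h)"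
  have \<pi>x: "\<pi> x \<in> BH" using cstar \<pi>_in[OF \<open>x \<in> A\<close>] by (rule cstar_subalg_BH)
  have "opmat_form 2 (gram_matrix (\<pi> x)) \<xi> = 0"
    by (simp add: opmat_form_gram_matrix[OF \<pi>x] \<xi>_def BH_minus[OF \<pi>x])
  moreover have "gram_matrix (\<pi> x) = (\<lambda>i j h. \<Sum>k<m. \<Phi> k (gram_matrix x i j) h)"
    using unital_star_hom_gram_matrix[OF cstar hom \<open>x \<in> A\<close>]
      decomposition[OF gram_matrix_in[OF cstar \<open>x \<in> A\<close>]] by simp
  ultimately have "opmat_form 2 (\<lambda>i' j. \<Phi> i (gram_matrix x i' j)) \<xi> = 0"
    using opmat_form_sum_eq_0[of "{..<m}" 2 "\<lambda>k i j. \<Phi> k (gram_matrix x i j)"]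
      complete_positive_gram_matrix[OF cstar cp \<open>x \<in> A\<close>] \<open>i < m\<close> by simp
  from pos_opmat_2_form_eq_0[of "\<lambda>i' j. \<Phi> i (gram_matrix x i' j)", OF
      \<Phi>_BH[OF \<open>i < m\<close> gram_matrix_in[OF cstar \<open>x \<in> A\<close>]]
      \<Phi>_BH[OF \<open>i < m\<close> gram_matrix_in[OF cstar \<open>x \<in> A\<close>]]
      complete_positive_gram_matrix[OF cstar cp[OF \<open>i < m\<close>] \<open>x \<in> A\<close>] this]
  have "\<Phi> i id (\<pi> x h) + \<Phi> i x (- h) = 0"
    by (simp add: gram_matrix_def \<xi>_def)
  then show "\<Phi> i x h = (\<Phi> i id \<circ> \<pi> x) h"
    using BH_minus[OF \<Phi>_BH[OF assms]] by (simp add: eq_neg_iff_add_eq_0 add.commute)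
qed

lemma summand_unit_in_commutant:
  assumes "i < m"
  shows "\<Phi> i id \<in> commutant (\<pi> ` A)"
proof -
  let ?z = "\<Phi> i id"
  have z_BH: "?z \<in> BH" using \<Phi>_BH[OF assms cstar_subalg_id[OF cstar]] .
  have z_self_adjoint: "cinner (?z \<beta>) \<gamma> = cinner \<beta> (?z \<gamma>)" for \<beta> \<gamma>
    using complete_positive_adj[OF cstar cp[OF assms] cstar_subalg_id[OF cstar]]
      cinner_adj_right[OF z_BH] by (simp add: adj_id)
  have "\<pi> x (?z \<beta>) = ?z (\<pi> x \<beta>)" if "x \<in> A" for x \<beta>
  proof (rule cinner_ext)
    fix \<alpha>
    have x: "\<pi> x \<in> BH" "adj x \<in> A" "\<pi> (adj x) = adj (\<pi> x)"
      using cstar hom that \<pi>_in[OF that]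
      by (simp_all add: cstar_subalg_BH cstar_subalg_adj unital_star_hom_def)
    have "cinner \<alpha> (\<pi> x (?z \<beta>)) = cinner (?z (adj (\<pi> x) \<alpha>)) \<beta>"
      using cinner_adj_left[OF x(1)] z_self_adjoint by simp
    also have "\<dots> = cinner (\<Phi> i (adj x) \<alpha>) \<beta>"
      using summand_factorization[OF assms x(2)] x(3) by simp
    also have "\<dots> = cinner \<alpha> (\<Phi> i x \<beta>)"
      using complete_positive_adj[OF cstar cp[OF assms] that] cinner_adj_left[OF \<Phi>_BH[OF assms that]]
      by simp
    also have "\<dots> = cinner \<alpha> (?z (\<pi> x \<beta>))"
      using summand_factorization[OF assms that] by simp
    finally show "cinner \<alpha> (\<pi> x (?z \<beta>)) = cinner \<alpha> (?z (\<pi> x \<beta>))" .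
  qed
  then show ?thesis using z_BH unfolding commutant_def by (auto simp: fun_eq_iff)
qed

end

theorem mainTheorem4:
  fixes A :: "('h::chilbert_space \<Rightarrow> 'h) set"
    and \<phi> :: "('h \<Rightarrow> 'h) \<Rightarrow> complex"
    and \<Theta> \<Theta>s :: "('h \<Rightarrow> 'h) \<Rightarrow> ('h \<Rightarrow> 'h)"
  assumes "cstar_subalg A"
    and "faithful_state A \<phi>"
    and "star_automorphism A \<Theta>"
    and "\<forall>x\<in>A. \<phi> (\<Theta> x) = \<phi> x"
    and "\<Theta>s ` A \<subseteq> A"
    and "\<forall>x\<in>A. \<forall>y\<in>A. \<phi> (adj y \<circ> \<Theta>s x) = \<phi> (adj (\<Theta> y) \<circ> x)"
  shows "\<forall>(m::nat) (a :: nat \<Rightarrow> ('h \<Rightarrow> 'h)) (\<Psi> :: nat \<Rightarrow> ('h \<Rightarrow> 'h) \<Rightarrow> ('h \<Rightarrow> 'h)).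
           (\<forall>i<m. complete_positive A (\<Psi> i)) \<and>
           (\<forall>i<m. a i \<in> A \<and> a i \<noteq> (\<lambda>_. 0)) \<and>
           (\<lambda>h. \<Sum>i<m. a i (adj (a i) h)) = id \<and>
           (\<forall>x\<in>A. \<Theta>s x = (\<lambda>h. \<Sum>i<m. Ad (a i) (\<Psi> i x) h))
           \<longrightarrow> (\<exists>z :: nat \<Rightarrow> ('h \<Rightarrow> 'h). \<forall>i<m. z i \<in> commutant (\<Theta>s ` A) \<and>
                  (\<forall>x\<in>A. Ad (a i) (\<Psi> i x) = z i \<circ> \<Theta>s x))"
proof (intro allI impI)
  fix m :: nat and a :: "nat \<Rightarrow> ('h \<Rightarrow> 'h)" and \<Psi> :: "nat \<Rightarrow> ('h \<Rightarrow> 'h) \<Rightarrow> ('h \<Rightarrow> 'h)"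
  assume "(\<forall>i<m. complete_positive A (\<Psi> i)) \<and> (\<forall>i<m. a i \<in> A \<and> a i \<noteq> (\<lambda>_. 0)) \<and>
    (\<lambda>h. \<Sum>i<m. a i (adj (a i) h)) = id \<and> (\<forall>x\<in>A. \<Theta>s x = (\<lambda>h. \<Sum>i<m. Ad (a i) (\<Psi> i x) h))"
  then have cp: "\<And>i. i < m \<Longrightarrow> complete_positive A (\<Psi> i)" and a: "\<And>i. i < m \<Longrightarrow> a i \<in> A"
    and decomposition: "\<And>x. x \<in> A \<Longrightarrow> \<Theta>s x = (\<lambda>h. \<Sum>i<m. Ad (a i) (\<Psi> i x) h)"
    by auto
  interpret star_hom_cp_decomposition A \<Theta>s "\<lambda>i x. Ad (a i) (\<Psi> i x)" m
  proof
    show "cstar_subalg A" by (rule assms(1))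
    show "unital_star_hom A \<Theta>s"
      using state_adjoint_inverts_automorphism[OF assms]
      by (rule unital_star_hom_right_inverse[OF assms(1,3,5)])
    show "complete_positive A (\<lambda>x. Ad (a i) (\<Psi> i x))" if "i < m" for i
      using complete_positive_Ad[OF assms(1) cp[OF that] a[OF that]] .
  qed (rule decomposition)
  have "\<forall>i<m. Ad (a i) (\<Psi> i id) \<in> commutant (\<Theta>s ` A) \<and>
      (\<forall>x\<in>A. Ad (a i) (\<Psi> i x) = Ad (a i) (\<Psi> i id) \<circ> \<Theta>s x)"
    using summand_unit_in_commutant summand_factorization by simp
  then show "\<exists>z. \<forall>i<m. z i \<in> commutant (\<Theta>s ` A) \<and> (\<forall>x\<in>A. Ad (a i) (\<Psi> i x) = z i \<circ> \<Theta>s x)"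
    by (intro exI[of _ "\<lambda>i. Ad (a i) (\<Psi> i id)"])
qed

end
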